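(* Let $\rho$ be a non-integer real number greater than $-1$, and let $\phi\in\zeta^\rho\,\mathcal{O}_{\zeta=0}$. Let $h_n,\dots,h_0,h_{-1},\dots,h_{-m}\in\mathcal{O}_{\zeta=0}$. Then $$\Big[\sum_{k=0}^n\big(\tfrac{\partial}{\partial\zeta}\big)^k\circ h_k+\sum_{k=1}^m\partial^{-k}_{\zeta,0}\circ h_{-k}\Big]\phi=0$$ if and only if $$\Big[\sum_{k=1}^n\big(\tfrac{\partial}{\partial\zeta}\big)^{k-1}\circ h_k+\sum_{k=0}^m\partial^{-k-1}_{\zeta,0}\circ h_{-k}\Big]\phi=0.$$
   Context: $\mathcal{O}_{\zeta=0}$ is the algebra of germs of holomorphic functions at $\zeta=0$, and $\zeta^\rho\,\mathcal{O}_{\zeta=0}$ consists of germs of the form $\zeta^\rho g$ with $g\in\mathcal{O}_{\zeta=0}$ (on a slit neighbourhood of $0$, with a fixed branch of $\zeta^\rho$). Each $h_j$ acts by multiplication. For an integer $k\ge1$, the integral operator is $\partial^{-k}_{\zeta,0}\psi(\zeta)=\frac{1}{\Gamma(k)}\int_0^\zeta(\zeta-\zeta')^{k-1}\psi(\zeta')\,d\zeta'$, integrated along the segment from $0$ to $\zeta$ ($k$-fold repeated integration from $0$). *)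

theory Defs
  imports "HOL-Complex_Analysis.Complex_Analysis"
begin

text \<open>Slit disc: the disc of radius r around 0 with the closed negative real
  axis removed; on it the principal branch of z powr rho is holomorphic.\<close>
definition slit_ball :: "real \<Rightarrow> complex set" where
  "slit_ball r = ball 0 r - {z. Im z = 0 \<and> Re z \<le> 0}"

text \<open>k-fold integration from 0 along the segment [0, z]:
  (1 / Gamma k) times the integral of (z - w)^(k-1) psi(w) dw.\<close>
definition int_from0 :: "nat \<Rightarrow> (complex \<Rightarrow> complex) \<Rightarrow> complex \<Rightarrow> complex" where
  "int_from0 k psi z =
     (1 / Gamma (of_nat k)) * contour_integral (linepath 0 z) (\<lambda>w. (z - w) ^ (k - 1) * psi w)"

definition dz_pow :: "nat \<Rightarrow> (complex \<Rightarrow> complex) \<Rightarrow> complex \<Rightarrow> complex" where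
  "dz_pow k psi = (deriv ^^ k) psi"

definition vanishes_near0 :: "(complex \<Rightarrow> complex) \<Rightarrow> bool" where
  "vanishes_near0 f \<longleftrightarrow> (\<exists>e>0. \<forall>z\<in>slit_ball e. f z = 0)"

end

theory Submission
  imports Defs
begin

text \<open>
  Put \<psi>_k = h_k \<phi>; each is z powr \<rho> times a holomorphic function. On the slit disc the second
  operator applied to \<phi> is an antiderivative of the first, because differentiation lowers the order of
  every derivative and of every iterated integral from 0 by one (the integral of \<psi>_0 giving back
  \<psi>_0). Hence if the second vanishes near 0 so does the first, and if the first vanishes the second
  is a constant c near 0. Every term of the second is z powr (\<rho> - n) times a holomorphic function:
  derivatives lower the exponent by one, and for \<alpha> > -1 the primitive of z powr \<alpha> * H vanishing at 0
  is z powr (\<alpha> + 1) * K, with K solving (\<alpha> + 1) K + z K' = H by a power series. Since \<rho> - n is not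
  an integer, such a function picks up the factor exp (2 \<pi> i (\<rho> - n)) across the cut, so it is
  constant only if it vanishes; thus c = 0.
\<close>

section \<open>The slit disc\<close>

lemma slit_ball_subset_ball: "slit_ball r \<subseteq> ball 0 r"
  by (auto simp: slit_ball_def)

lemma slit_ball_mono: "e \<le> r \<Longrightarrow> slit_ball e \<subseteq> slit_ball r"
  by (auto simp: slit_ball_def)

lemma slit_ball_not_nonpos_Reals: "z \<in> slit_ball r \<Longrightarrow> z \<notin> \<real>\<^sub>\<le>\<^sub>0"
  by (auto simp: slit_ball_def complex_nonpos_Reals_iff)

lemma open_slit_ball: "open (slit_ball r)"
proof -
  have "closed {z::complex. Im z = 0 \<and> Re z \<le> 0}"
    by (intro closed_Collect_conj closed_Collect_eq closed_Collect_le continuous_intros)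
  then show ?thesis unfolding slit_ball_def by (intro open_Diff) auto
qed

lemma linepath_0_in_slit_ball:
  assumes z: "z \<in> slit_ball r" and t: "0 < t" "t \<le> 1"
  shows "linepath 0 z t \<in> slit_ball r"
proof -
  have "linepath 0 z t = of_real t * z"
    by (simp add: linepath_def scaleR_conv_of_real)
  moreover have "norm (of_real t * z) < r"
    using z t mult_left_le_one_le[of "norm z" t]
    by (auto simp: slit_ball_def norm_mult)
  moreover have "\<not> (Im (of_real t * z) = 0 \<and> Re (of_real t * z) \<le> 0)"
    using z t by (auto simp: slit_ball_def mult_le_0_iff)
  ultimately show ?thesis by (simp add: slit_ball_def)
qed

lemma connected_slit_ball:
  assumes "0 < e"
  shows "connected (slit_ball e)"
proof (rule starlike_imp_connected)
  define a where "a = complex_of_real (e / 2)"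
  have a: "a \<in> slit_ball e" using assms by (simp add: a_def slit_ball_def)
  have "closed_segment a x \<subseteq> slit_ball e" if x: "x \<in> slit_ball e" for x
  proof
    fix y assume y: "y \<in> closed_segment a x"
    then have "y \<in> ball 0 e"
      using closed_segment_subset[of a "ball 0 e" x] a x slit_ball_subset_ball by blast
    moreover obtain u where u: "0 \<le> u" "u \<le> 1" "y = (1 - u) *\<^sub>R a + u *\<^sub>R x"
      using y in_segment(1) by blast
    have "Re y > 0" if "Im y = 0"
    proof (cases "u = 0")
      case False
      with that u have "Im x = 0" by (simp add: a_def)
      with x have "Re x > 0" by (auto simp: slit_ball_def)
      with False u assms show ?thesis
        by (simp add: a_def add_nonneg_pos)
    next
      case True
      with u have "y = a" by simp
      moreover have "Re a > 0" using assms by (simp add: a_def)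
      ultimately show ?thesis by simp
    qed
    ultimately show "y \<in> slit_ball e" by (auto simp: slit_ball_def)
  qed
  with a show "starlike (slit_ball e)" unfolding starlike_def by blast
qed

section \<open>Multiples of powers by holomorphic functions\<close>

lemma powr_of_real_add_nat:
  fixes z :: complex
  assumes "z \<noteq> 0"
  shows "z powr of_real (\<beta> + real j) = z powr of_real \<beta> * z ^ j"
proof -
  have "z powr of_real (\<beta> + real j) = z powr of_real \<beta> * z powr of_nat j"
    by (simp add: powr_add)
  also have "z powr of_nat j = z ^ j" using assms by simp
  finally show ?thesis .
qed

lemma Ints_if_exp_mult_eq_across_cut:
  fixes a :: complex
  assumes "exp (of_real \<beta> * (a + \<i> * pi)) = exp (of_real \<beta> * (a - \<i> * pi))"
  shows "\<beta> \<in> \<int>"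
proof -
  have "exp (of_real \<beta> * (a + \<i> * pi) - of_real \<beta> * (a - \<i> * pi)) = 1"
    using assms by (simp add: exp_diff)
  then obtain n :: int where "2 * \<beta> * pi = of_int (2 * n) * pi"
    unfolding exp_eq_1 by (auto simp: algebra_simps)
  then have "\<beta> = of_int n" by simp
  then show ?thesis by simp
qed

lemma has_field_derivative_powr_mult:
  fixes w :: complex
  assumes w: "w \<notin> \<real>\<^sub>\<le>\<^sub>0" and K: "(K has_field_derivative K') (at w)"
  shows "((\<lambda>x. x powr of_real (\<gamma> + 1) * K x) has_field_derivative
           w powr of_real \<gamma> * (of_real (\<gamma> + 1) * K w + w * K')) (at w)"
proof -
  have w0: "w \<noteq> 0" using w by auto
  have "((\<lambda>x. x powr of_real (\<gamma> + 1) * K x) has_field_derivative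
          of_real (\<gamma> + 1) * w powr (of_real (\<gamma> + 1) - 1) * K w + K' * w powr of_real (\<gamma> + 1)) (at w)"
    by (rule DERIV_mult[OF has_field_derivative_powr[OF w] K])
  also have "of_real (\<gamma> + 1) * w powr (of_real (\<gamma> + 1) - 1) * K w + K' * w powr of_real (\<gamma> + 1)
      = w powr of_real \<gamma> * (of_real (\<gamma> + 1) * K w + w * K')"
  proof -
    have "of_real (\<gamma> + 1) - 1 = (of_real \<gamma> :: complex)" by simp
    moreover have "w powr of_real (\<gamma> + 1) = w powr of_real \<gamma> * w"
      using powr_of_real_add_nat[OF w0, of \<gamma> 1] by simp
    ultimately show ?thesis by (simp add: algebra_simps)
  qed
  finally show ?thesis .
qed

lemma isCont_powr_mult_at_0:
  fixes K :: "complex \<Rightarrow> complex"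
  assumes "\<gamma> > 0" "isCont K 0"
  shows "isCont (\<lambda>w. w powr of_real \<gamma> * K w) 0"
proof -
  have "((\<lambda>w::complex. norm w powr \<gamma>) \<longlongrightarrow> 0) (at 0)"
    by (rule tendsto_zero_powrI) (auto intro!: tendsto_norm_zero tendsto_ident_at assms(1))
  then have "((\<lambda>w::complex. norm (w powr of_real \<gamma>)) \<longlongrightarrow> 0) (at 0)"
    by (simp add: norm_powr_real_powr')
  then have "((\<lambda>w::complex. w powr of_real \<gamma>) \<longlongrightarrow> 0) (at 0)"
    by (simp only: tendsto_norm_zero_iff)
  then have "((\<lambda>w. w powr of_real \<gamma> * K w) \<longlongrightarrow> 0 * K 0) (at 0)"
    using assms(2) unfolding isCont_def by (rule tendsto_mult)
  then show ?thesis unfolding isCont_def by simp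
qed

(* The class z^\<beta> O of the paper, realised on the slit disc of radius r. *)
definition powr_holomorphic :: "real \<Rightarrow> real \<Rightarrow> (complex \<Rightarrow> complex) \<Rightarrow> bool" where
  "powr_holomorphic r \<beta> f \<longleftrightarrow>
     (\<exists>K. K holomorphic_on ball 0 r \<and> (\<forall>z\<in>slit_ball r. f z = z powr of_real \<beta> * K z))"

lemma powr_holomorphic_cong:
  assumes "powr_holomorphic r \<beta> f" "\<And>z. z \<in> slit_ball r \<Longrightarrow> f z = f' z"
  shows "powr_holomorphic r \<beta> f'"
  using assms unfolding powr_holomorphic_def by metis

lemma powr_holomorphic_add:
  assumes "powr_holomorphic r \<beta> f" "powr_holomorphic r \<beta> g"
  shows "powr_holomorphic r \<beta> (\<lambda>z. f z + g z)"
proof -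
  obtain K where K: "K holomorphic_on ball 0 r" "\<And>z. z\<in>slit_ball r \<Longrightarrow> f z = z powr of_real \<beta> * K z"
    using assms(1) unfolding powr_holomorphic_def by blast
  obtain L where L: "L holomorphic_on ball 0 r" "\<And>z. z\<in>slit_ball r \<Longrightarrow> g z = z powr of_real \<beta> * L z"
    using assms(2) unfolding powr_holomorphic_def by blast
  show ?thesis unfolding powr_holomorphic_def
    by (intro exI[of _ "\<lambda>z. K z + L z"] conjI ballI holomorphic_intros K(1) L(1))
       (simp add: K(2) L(2) distrib_left)
qed

lemma powr_holomorphic_sum:
  assumes "\<And>k. k \<in> A \<Longrightarrow> powr_holomorphic r \<beta> (f k)"
  shows "powr_holomorphic r \<beta> (\<lambda>z. \<Sum>k\<in>A. f k z)"
  using assms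
proof (induction A rule: infinite_finite_induct)
  case (infinite A)
  then show ?case unfolding powr_holomorphic_def by (intro exI[of _ "\<lambda>z. 0"]) auto
next
  case empty
  then show ?case unfolding powr_holomorphic_def by (intro exI[of _ "\<lambda>z. 0"]) auto
next
  case (insert x F)
  then show ?case by (simp add: powr_holomorphic_add)
qed

lemma powr_holomorphic_lower_exponent:
  assumes "powr_holomorphic r \<beta> f" "\<beta> = \<gamma> + real j"
  shows "powr_holomorphic r \<gamma> f"
proof -
  obtain K where K: "K holomorphic_on ball 0 r" "\<And>z. z\<in>slit_ball r \<Longrightarrow> f z = z powr of_real \<beta> * K z"
    using assms(1) unfolding powr_holomorphic_def by blast
  show ?thesis unfolding powr_holomorphic_def
  proof (intro exI[of _ "\<lambda>z. z ^ j * K z"] conjI ballI)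
    show "(\<lambda>z. z ^ j * K z) holomorphic_on ball 0 r" using K(1) by (intro holomorphic_intros)
  next
    fix z assume z: "z \<in> slit_ball r"
    from slit_ball_not_nonpos_Reals[OF z] have "z \<noteq> 0" by auto
    then show "f z = z powr of_real \<gamma> * (z ^ j * K z)"
      using K(2)[OF z] powr_of_real_add_nat[of z \<gamma> j] assms(2) by simp
  qed
qed

lemma
  assumes "powr_holomorphic r \<beta> f"
  shows powr_holomorphic_deriv: "powr_holomorphic r (\<beta> - 1) (deriv f)"
    and powr_holomorphic_has_field_derivative:
      "z \<in> slit_ball r \<Longrightarrow> (f has_field_derivative deriv f z) (at z)"
proof -
  obtain K where K: "K holomorphic_on ball 0 r" "\<And>z. z\<in>slit_ball r \<Longrightarrow> f z = z powr of_real \<beta> * K z"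
    using assms unfolding powr_holomorphic_def by blast
  define L where "L z = of_real \<beta> * K z + z * deriv K z" for z
  have f': "(f has_field_derivative z powr of_real (\<beta> - 1) * L z) (at z)" if z: "z \<in> slit_ball r" for z
  proof -
    have "(K has_field_derivative deriv K z) (at z)"
      using z slit_ball_subset_ball by (intro holomorphic_derivI[OF K(1) open_ball]) blast
    from has_field_derivative_powr_mult[OF slit_ball_not_nonpos_Reals[OF z] this, of "\<beta> - 1"]
    have "((\<lambda>x. x powr of_real \<beta> * K x) has_field_derivative z powr of_real (\<beta> - 1) * L z) (at z)"
      by (simp add: L_def)
    then show ?thesis
      by (rule has_field_derivative_transform_within_open[OF _ open_slit_ball z]) (use K(2) in auto)
  qed
  then show "z \<in> slit_ball r \<Longrightarrow> (f has_field_derivative deriv f z) (at z)"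
    using DERIV_imp_deriv by metis
  have "L holomorphic_on ball 0 r"
    unfolding L_def using K(1) by (intro holomorphic_intros holomorphic_deriv) auto
  then show "powr_holomorphic r (\<beta> - 1) (deriv f)"
    unfolding powr_holomorphic_def using f' DERIV_imp_deriv by blast
qed

lemma powr_holomorphic_dz_pow:
  assumes "powr_holomorphic r \<beta> f"
  shows "powr_holomorphic r (\<beta> - real k) (dz_pow k f)"
proof (induction k)
  case 0
  then show ?case using assms by (simp add: dz_pow_def)
next
  case (Suc k)
  from powr_holomorphic_deriv[OF this] show ?case
    by (simp add: dz_pow_def algebra_simps)
qed

lemma has_field_derivative_dz_pow:
  assumes "powr_holomorphic r \<beta> f" "z \<in> slit_ball r"
  shows "(dz_pow k f has_field_derivative dz_pow (Suc k) f z) (at z)"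
  using powr_holomorphic_has_field_derivative[OF powr_holomorphic_dz_pow[OF assms(1)] assms(2)]
  by (simp add: dz_pow_def)

section \<open>Primitives\<close>

lemma fps_conv_radius_le_if_norm_coeff_le:
  fixes f g :: "'a :: {banach, real_normed_div_algebra} fps"
  assumes "\<And>n. norm (fps_nth g n) \<le> c * norm (fps_nth f n)"
  shows "fps_conv_radius f \<le> fps_conv_radius g"
  unfolding fps_conv_radius_def
proof (rule conv_radius_geI_ex')
  fix s :: real assume "0 < s" "ereal s < conv_radius (fps_nth f)"
  then have "summable (\<lambda>n. c * norm (fps_nth f n * of_real s ^ n))"
    by (intro summable_mult abs_summable_in_conv_radius) simp
  then show "summable (\<lambda>n. fps_nth g n * of_real s ^ n)"
  proof (rule summable_comparison_test')
    fix n
    show "norm (fps_nth g n * of_real s ^ n) \<le> c * norm (fps_nth f n * of_real s ^ n)"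
      using mult_right_mono[OF assms[of n], of "norm (of_real s ^ n :: 'a)"]
      by (simp add: norm_mult mult.assoc)
  qed
qed

(* If H = \<Sum> a\<^sub>n z\<^sup>n, then K = \<Sum> a\<^sub>n z\<^sup>n / (\<alpha> + 1 + n); \<alpha> > -1 keeps the denominators
   away from 0, so the radius of convergence does not shrink. *)
lemma euler_equation_holomorphic_solution:
  fixes \<alpha> :: real and H :: "complex \<Rightarrow> complex"
  assumes \<alpha>: "\<alpha> > -1" and H: "H holomorphic_on ball 0 r"
  obtains K where "K holomorphic_on ball 0 r"
    "\<And>z. z \<in> ball 0 r \<Longrightarrow> of_real (\<alpha> + 1) * K z + z * deriv K z = H z"
proof
  define F where "F = fps_expansion H 0"
  define C where "C = Abs_fps (\<lambda>n. fps_nth F n / of_real (\<alpha> + 1 + real n))"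
  have rF: "ereal r \<le> fps_conv_radius F"
    unfolding F_def using H by (intro conv_radius_fps_expansion) simp
  have "norm (fps_nth C n) \<le> 1 / (\<alpha> + 1) * norm (fps_nth F n)" for n
  proof -
    have "norm (of_real (\<alpha> + 1 + real n) :: complex) = \<alpha> + 1 + real n"
      using \<alpha> by (simp only: norm_of_real)
    then have "norm (fps_nth C n) = norm (fps_nth F n) / (\<alpha> + 1 + real n)"
      unfolding C_def fps_nth_Abs_fps norm_divide by simp
    also have "\<dots> \<le> norm (fps_nth F n) / (\<alpha> + 1)"
      using \<alpha> by (intro divide_left_mono) auto
    finally show ?thesis by simp
  qed
  then have "fps_conv_radius F \<le> fps_conv_radius C"
    by (rule fps_conv_radius_le_if_norm_coeff_le)
  with rF have rC: "ereal r \<le> fps_conv_radius C" by simp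
  have equation: "fps_const (of_real (\<alpha> + 1)) * C + fps_X * fps_deriv C = F"
  proof (rule fps_ext)
    fix n
    have "of_real (\<alpha> + 1 + real n) \<noteq> (0 :: complex)"
      using \<alpha> by (simp only: of_real_eq_0_iff)
    moreover have "fps_nth (fps_const (of_real (\<alpha> + 1)) * C + fps_X * fps_deriv C) n
        = of_real (\<alpha> + 1 + real n) * fps_nth C n"
      by (simp add: fps_mult_fps_X_deriv_shift algebra_simps)
    ultimately show "fps_nth (fps_const (of_real (\<alpha> + 1)) * C + fps_X * fps_deriv C) n = fps_nth F n"
      by (simp add: C_def)
  qed
  show "eval_fps C holomorphic_on ball 0 r"
    using rC by (intro holomorphic_on_eval_fps ball_eball_mono)
  fix z :: complex assume z: "z \<in> ball 0 r"
  then have "ereal (norm z) < ereal r" by simp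
  then have zC: "norm z < fps_conv_radius C" using rC by (rule less_le_trans)
  then have zC': "norm z < fps_conv_radius (fps_deriv C)"
    using fps_conv_radius_deriv[of C] by (rule less_le_trans)
  have "deriv (eval_fps C) z = eval_fps (fps_deriv C) z"
    by (intro DERIV_imp_deriv has_field_derivative_eval_fps zC)
  moreover have "H (0 + z) = eval_fps F z"
    unfolding F_def by (rule eval_fps_expansion'[where r = "ereal r", symmetric]) (use H z in auto)
  moreover have "eval_fps F z = of_real (\<alpha> + 1) * eval_fps C z + z * eval_fps (fps_deriv C) z"
  proof -
    have "norm z < fps_conv_radius (fps_const (of_real (\<alpha> + 1)) * C)"
      using fps_conv_radius_mult[of "fps_const (of_real (\<alpha> + 1))" C] zC by simp
    moreover have "norm z < fps_conv_radius (fps_X * fps_deriv C)"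
      using fps_conv_radius_mult[of fps_X "fps_deriv C"] zC' by simp
    ultimately show ?thesis
      unfolding equation[symmetric] using zC zC' by (simp add: eval_fps_add eval_fps_mult)
  qed
  ultimately show "of_real (\<alpha> + 1) * eval_fps C z + z * deriv (eval_fps C) z = H z"
    by simp
qed

lemma powr_primitive:
  fixes \<alpha> :: real
  assumes "\<alpha> > -1" "H holomorphic_on ball 0 r"
  obtains K where "K holomorphic_on ball 0 r"
    "\<And>w. w \<in> slit_ball r \<Longrightarrow>
       ((\<lambda>x. x powr of_real (\<alpha> + 1) * K x) has_field_derivative w powr of_real \<alpha> * H w) (at w)"
proof -
  obtain K where K: "K holomorphic_on ball 0 r"
    "\<And>z. z \<in> ball 0 r \<Longrightarrow> of_real (\<alpha> + 1) * K z + z * deriv K z = H z"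
    using euler_equation_holomorphic_solution[OF assms] by blast
  show ?thesis
  proof (rule that[OF K(1)])
    fix w assume w: "w \<in> slit_ball r"
    then have "w \<in> ball 0 r" using slit_ball_subset_ball by blast
    with has_field_derivative_powr_mult[OF slit_ball_not_nonpos_Reals[OF w]
        holomorphic_derivI[OF K(1) open_ball], of \<alpha>]
    show "((\<lambda>x. x powr of_real (\<alpha> + 1) * K x) has_field_derivative w powr of_real \<alpha> * H w) (at w)"
      using K(2) by simp
  qed
qed

lemma powr_primitive_sequence:
  fixes \<alpha> :: real
  assumes \<alpha>: "\<alpha> > -1" and H: "H holomorphic_on ball 0 r"
  obtains Ks where "Ks 0 = H" and "\<And>j. Ks j holomorphic_on ball 0 r"
    and "\<And>j w. w \<in> slit_ball r \<Longrightarrow>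
      ((\<lambda>x. x powr of_real (\<alpha> + real (Suc j)) * Ks (Suc j) x) has_field_derivative
        w powr of_real (\<alpha> + real j) * Ks j w) (at w)"
proof -
  define prim where "prim j L = (SOME K. K holomorphic_on ball 0 r \<and>
      (\<forall>w\<in>slit_ball r. ((\<lambda>x. x powr of_real (\<alpha> + real j + 1) * K x) has_field_derivative
          w powr of_real (\<alpha> + real j) * L w) (at w)))" for j L
  have prim: "prim j L holomorphic_on ball 0 r \<and>
      (\<forall>w\<in>slit_ball r. ((\<lambda>x. x powr of_real (\<alpha> + real j + 1) * prim j L x) has_field_derivative
          w powr of_real (\<alpha> + real j) * L w) (at w))"
    if "L holomorphic_on ball 0 r" for j L
  proof -
    have "\<alpha> + real j > -1" using \<alpha> by simp
    from powr_primitive[OF this that] obtain K where K: "K holomorphic_on ball 0 r"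
      "\<And>w. w \<in> slit_ball r \<Longrightarrow> ((\<lambda>x. x powr of_real (\<alpha> + real j + 1) * K x) has_field_derivative
          w powr of_real (\<alpha> + real j) * L w) (at w)" by blast
    show ?thesis unfolding prim_def by (rule someI[where x = K]) (use K in blast)
  qed
  define Ks where "Ks = rec_nat H prim"
  have Ks_holo: "Ks j holomorphic_on ball 0 r" for j
    by (induction j) (simp_all add: Ks_def H prim)
  show ?thesis
  proof (rule that[of Ks, OF _ Ks_holo])
    fix j w assume "w \<in> slit_ball r"
    moreover have "\<alpha> + real (Suc j) = \<alpha> + real j + 1" "Ks (Suc j) = prim j (Ks j)"
      by (simp_all add: Ks_def)
    ultimately show "((\<lambda>x. x powr of_real (\<alpha> + real (Suc j)) * Ks (Suc j) x) has_field_derivative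
        w powr of_real (\<alpha> + real j) * Ks j w) (at w)"
      using prim[OF Ks_holo[of j]] by (simp only:)
  qed (simp add: Ks_def)
qed

lemma powr_iterated_primitives:
  fixes \<alpha> :: real
  assumes \<alpha>: "\<alpha> > -1" and H: "H holomorphic_on ball 0 r" and r: "r > 0"
  obtains P where "\<And>w. P 0 w = w powr of_real \<alpha> * H w"
    and "\<And>j. powr_holomorphic r (\<alpha> + real j) (P j)"
    and "\<And>j w. w \<in> slit_ball r \<Longrightarrow> (P (Suc j) has_field_derivative P j w) (at w)"
    and "\<And>j. j \<ge> 1 \<Longrightarrow> isCont (P j) 0 \<and> P j 0 = 0"
proof -
  obtain Ks where Ks0: "Ks 0 = H" and Ks_holo: "\<And>j. Ks j holomorphic_on ball 0 r"
    and Ks': "\<And>j w. w \<in> slit_ball r \<Longrightarrow>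
      ((\<lambda>x. x powr of_real (\<alpha> + real (Suc j)) * Ks (Suc j) x) has_field_derivative
        w powr of_real (\<alpha> + real j) * Ks j w) (at w)"
    using powr_primitive_sequence[OF \<alpha> H] by blast
  show ?thesis
  proof (rule that[of "\<lambda>j w. w powr of_real (\<alpha> + real j) * Ks j w"])
    show "powr_holomorphic r (\<alpha> + real j) (\<lambda>w. w powr of_real (\<alpha> + real j) * Ks j w)" for j
      unfolding powr_holomorphic_def using Ks_holo by blast
    show "isCont (\<lambda>w. w powr of_real (\<alpha> + real j) * Ks j w) 0 \<and>
        (\<lambda>w. w powr of_real (\<alpha> + real j) * Ks j w) 0 = 0" if "j \<ge> 1" for j
    proof -
      have "isCont (Ks j) 0"
        using Ks_holo[of j] r holomorphic_on_imp_continuous_on continuous_on_eq_continuous_at open_ball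
        by (metis centre_in_ball)
      moreover have "\<alpha> + real j > 0" using \<alpha> that by simp
      ultimately show ?thesis using isCont_powr_mult_at_0[of "\<alpha> + real j" "Ks j"] by simp
    qed
    show "((\<lambda>w. w powr of_real (\<alpha> + real (Suc j)) * Ks (Suc j) w) has_field_derivative
        w powr of_real (\<alpha> + real j) * Ks j w) (at w)" if "w \<in> slit_ball r" for j w
      using Ks'[OF that] .
  qed (simp add: Ks0)
qed

section \<open>Iterated integrals from 0\<close>

lemma has_field_derivative_taylor_sum:
  fixes P :: "nat \<Rightarrow> complex \<Rightarrow> complex"
  assumes P': "\<And>j. (P (Suc j) has_field_derivative P j w) (at w)"
  shows "((\<lambda>w. P (Suc k) w + (\<Sum>i<k. (z - w) ^ Suc i / fact (Suc i) * P (k - i) w))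
           has_field_derivative (z - w) ^ k / fact k * P 0 w) (at w)"
proof -
  define v where "v i = (z - w) ^ i / fact i * P (k - i) w" for i
  have "((\<lambda>w. (z - w) ^ Suc i / fact (Suc i) * P (k - i) w) has_field_derivative v (Suc i) - v i) (at w)"
    if "i < k" for i
  proof -
    have "((\<lambda>w. (z - w) ^ Suc i) has_field_derivative of_nat (Suc i) * (z - w) ^ i * -1) (at w)"
      by (intro derivative_eq_intros) auto
    then have A: "((\<lambda>w. (z - w) ^ Suc i / fact (Suc i)) has_field_derivative - ((z - w) ^ i / fact i)) (at w)"
      by (auto dest: DERIV_cdivide[where c = "fact (Suc i)"] simp del: of_nat_Suc simp: fact_Suc)
    have B: "(P (k - i) has_field_derivative P (k - Suc i) w) (at w)"
      using P'[of "k - Suc i"] that by (simp add: Suc_diff_Suc)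
    show ?thesis
      by (rule DERIV_cong[OF DERIV_mult[OF A B]]) (simp add: v_def algebra_simps)
  qed
  then have "((\<lambda>w. P (Suc k) w + (\<Sum>i<k. (z - w) ^ Suc i / fact (Suc i) * P (k - i) w))
      has_field_derivative P k w + (\<Sum>i<k. v (Suc i) - v i)) (at w)"
    by (intro DERIV_add DERIV_sum P') auto
  also have "P k w + (\<Sum>i<k. v (Suc i) - v i) = (z - w) ^ k / fact k * P 0 w"
    by (simp only: sum_lessThan_telescope) (simp add: v_def)
  finally show ?thesis .
qed

(* The integrand is the derivative of the Taylor-type sum above, which is continuous on the
   closed segment, equals P (Suc k) z at z and vanishes at 0. *)
lemma has_contour_integral_iterated_primitive:
  fixes P :: "nat \<Rightarrow> complex \<Rightarrow> complex"
  assumes seg: "\<And>t. 0 < t \<Longrightarrow> t \<le> 1 \<Longrightarrow> linepath 0 z t \<in> S"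
    and P': "\<And>j w. w \<in> S \<Longrightarrow> (P (Suc j) has_field_derivative P j w) (at w)"
    and P0: "\<And>j. j \<ge> 1 \<Longrightarrow> isCont (P j) 0 \<and> P j 0 = 0"
  shows "((\<lambda>w. (z - w) ^ k / fact k * P 0 w) has_contour_integral P (Suc k) z) (linepath 0 z)"
proof -
  define Q where "Q w = P (Suc k) w + (\<Sum>i<k. (z - w) ^ Suc i / fact (Suc i) * P (k - i) w)" for w
  have Q': "(Q has_field_derivative (z - w) ^ k / fact k * P 0 w) (at w)" if "w \<in> S" for w
    unfolding Q_def[abs_def] using P'[OF that] by (rule has_field_derivative_taylor_sum)
  define g where "g = Q \<circ> linepath 0 z"
  have "continuous_on {0..1} g"
  proof (intro continuous_at_imp_continuous_on ballI)
    fix t :: real assume t: "t \<in> {0..1}"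
    have "isCont Q (linepath 0 z t)"
    proof (cases "t = 0")
      case True
      then show ?thesis unfolding Q_def using P0 by (intro continuous_intros) (auto simp del: fact_Suc)
    next
      case False
      with t seg have "linepath 0 z t \<in> S" by auto
      then show ?thesis using Q' DERIV_isCont by blast
    qed
    then show "isCont g t"
      unfolding g_def by (intro continuous_at_compose) (auto simp: linepath_def intro: continuous_intros)
  qed
  moreover have "(g has_vector_derivative (z - 0) * ((z - linepath 0 z t) ^ k / fact k * P 0 (linepath 0 z t))) (at t)"
    if "t \<in> {0<..<1}" for t
    unfolding g_def using that seg
    by (intro field_vector_diff_chain_at has_vector_derivative_linepath_within Q') auto
  ultimately have "((\<lambda>t. (z - 0) * ((z - linepath 0 z t) ^ k / fact k * P 0 (linepath 0 z t)))
      has_integral (g 1 - g 0)) {0..1}"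
    by (intro fundamental_theorem_of_calculus_interior) auto
  moreover have "g 1 = P (Suc k) z" and "g 0 = 0"
    using P0 by (simp_all add: g_def Q_def)
  ultimately show ?thesis
    by (simp add: has_contour_integral_linepath mult.commute)
qed

lemma int_from0_iterated_primitive:
  fixes P :: "nat \<Rightarrow> complex \<Rightarrow> complex"
  assumes seg: "\<And>t. 0 < t \<Longrightarrow> t \<le> 1 \<Longrightarrow> linepath 0 z t \<in> S"
    and P': "\<And>j w. w \<in> S \<Longrightarrow> (P (Suc j) has_field_derivative P j w) (at w)"
    and P0: "\<And>j. j \<ge> 1 \<Longrightarrow> isCont (P j) 0 \<and> P j 0 = 0"
    and \<psi>: "\<And>w. w \<in> S \<Longrightarrow> \<psi> w = P 0 w"
  shows "int_from0 (Suc k) \<psi> z = P (Suc k) z"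
proof -
  have "((\<lambda>w. fact k * ((z - w) ^ k / fact k * P 0 w)) has_contour_integral fact k * P (Suc k) z)
      (linepath 0 z)"
    using has_contour_integral_iterated_primitive[where S = S and P = P, OF seg P' P0] by (rule has_contour_integral_lmul)
  then have I: "((\<lambda>t. (z - linepath 0 z t) ^ k * P 0 (linepath 0 z t) * z)
      has_integral fact k * P (Suc k) z) {0..1}"
    by (simp add: has_contour_integral_linepath)
  have "((\<lambda>t. (z - linepath 0 z t) ^ k * \<psi> (linepath 0 z t) * z)
      has_integral fact k * P (Suc k) z) {0..1}"
    by (rule has_integral_spike_finite[where S = "{0}", OF _ _ I]) (use seg \<psi> in auto)
  then have "contour_integral (linepath 0 z) (\<lambda>w. (z - w) ^ k * \<psi> w) = fact k * P (Suc k) z"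
    by (intro contour_integral_unique) (simp add: has_contour_integral_linepath)
  moreover have "Gamma (of_nat (Suc k)) = (fact k :: complex)"
    using Gamma_fact[of k] by (simp add: add.commute)
  ultimately show ?thesis by (simp add: int_from0_def)
qed

(* int_from0 0 is the junk value 0 (Gamma 0 = 0 in HOL), whence the case distinction. *)
lemma
  fixes \<alpha> :: real
  assumes \<alpha>: "\<alpha> > -1" and r: "r > 0" and \<psi>: "powr_holomorphic r \<alpha> \<psi>"
  shows powr_holomorphic_int_from0:
      "powr_holomorphic r (\<alpha> + real (Suc k)) (int_from0 (Suc k) \<psi>)"
    and has_field_derivative_int_from0:
      "z \<in> slit_ball r \<Longrightarrow>
         (int_from0 (Suc k) \<psi> has_field_derivative (if k = 0 then \<psi> z else int_from0 k \<psi> z)) (at z)"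
proof -
  obtain H where H: "H holomorphic_on ball 0 r"
    "\<And>z. z \<in> slit_ball r \<Longrightarrow> \<psi> z = z powr of_real \<alpha> * H z"
    using \<psi> unfolding powr_holomorphic_def by blast
  obtain P where P0: "\<And>w. P 0 w = w powr of_real \<alpha> * H w"
    and P_class: "\<And>j. powr_holomorphic r (\<alpha> + real j) (P j)"
    and P': "\<And>j w. w \<in> slit_ball r \<Longrightarrow> (P (Suc j) has_field_derivative P j w) (at w)"
    and P_at_0: "\<And>j. j \<ge> 1 \<Longrightarrow> isCont (P j) 0 \<and> P j 0 = 0"
    using powr_iterated_primitives[OF \<alpha> H(1) r] by blast
  have int_eq: "int_from0 (Suc j) \<psi> z = P (Suc j) z" if "z \<in> slit_ball r" for j z
    using linepath_0_in_slit_ball[OF that] P' P_at_0 H(2) P0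
    by (intro int_from0_iterated_primitive[where S = "slit_ball r"]) auto
  show "powr_holomorphic r (\<alpha> + real (Suc k)) (int_from0 (Suc k) \<psi>)"
    using powr_holomorphic_cong[OF P_class] int_eq by metis
  assume z: "z \<in> slit_ball r"
  have "P k z = (if k = 0 then \<psi> z else int_from0 k \<psi> z)"
    using z H(2) P0 int_eq[of z "k - 1"] by (cases k) auto
  with P'[OF z, of k] have "(P (Suc k) has_field_derivative (if k = 0 then \<psi> z else int_from0 k \<psi> z)) (at z)"
    by simp
  then show "(int_from0 (Suc k) \<psi> has_field_derivative (if k = 0 then \<psi> z else int_from0 k \<psi> z)) (at z)"
    by (rule has_field_derivative_transform_within_open[OF _ open_slit_ball z]) (use int_eq in auto)
qed

section \<open>The two operators\<close>

(* \<psi> k stands for h\<^sub>k \<phi>. *)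
definition integro_diff_op :: "nat \<Rightarrow> nat \<Rightarrow> (int \<Rightarrow> complex \<Rightarrow> complex) \<Rightarrow> complex \<Rightarrow> complex" where
  "integro_diff_op n m \<psi> =
     (\<lambda>z. (\<Sum>k=0..n. dz_pow k (\<psi> (int k)) z) + (\<Sum>k=1..m. int_from0 k (\<psi> (- int k)) z))"

definition integro_diff_op_antideriv :: "nat \<Rightarrow> nat \<Rightarrow> (int \<Rightarrow> complex \<Rightarrow> complex) \<Rightarrow> complex \<Rightarrow> complex" where
  "integro_diff_op_antideriv n m \<psi> =
     (\<lambda>z. (\<Sum>k=1..n. dz_pow (k - 1) (\<psi> (int k)) z) + (\<Sum>k=0..m. int_from0 (k + 1) (\<psi> (- int k)) z))"

lemma has_field_derivative_integro_diff_op_antideriv: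
  assumes \<rho>: "\<rho> > -1" and r: "r > 0"
    and \<psi>: "\<And>k. k \<in> {-int m..int n} \<Longrightarrow> powr_holomorphic r \<rho> (\<psi> k)"
    and z: "z \<in> slit_ball r"
  shows "(integro_diff_op_antideriv n m \<psi> has_field_derivative integro_diff_op n m \<psi> z) (at z)"
proof -
  have "((\<lambda>z. \<Sum>k=1..n. dz_pow (k - 1) (\<psi> (int k)) z) has_field_derivative
      (\<Sum>k=1..n. dz_pow k (\<psi> (int k)) z)) (at z)"
  proof (rule DERIV_sum)
    fix k assume "k \<in> {1..n}"
    then have "int k \<in> {-int m..int n}" and "Suc (k - 1) = k" by auto
    with has_field_derivative_dz_pow[OF \<psi> z, of "int k" "k - 1"]
    show "((\<lambda>z. dz_pow (k - 1) (\<psi> (int k)) z) has_field_derivative dz_pow k (\<psi> (int k)) z) (at z)"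
      by simp
  qed
  moreover have "((\<lambda>z. \<Sum>k=0..m. int_from0 (k + 1) (\<psi> (- int k)) z) has_field_derivative
      (\<Sum>k=0..m. if k = 0 then \<psi> 0 z else int_from0 k (\<psi> (- int k)) z)) (at z)"
  proof (rule DERIV_sum)
    fix k assume "k \<in> {0..m}"
    then have "- int k \<in> {-int m..int n}" by auto
    from has_field_derivative_int_from0[OF \<rho> r \<psi>[OF this] z, of k]
    show "((\<lambda>z. int_from0 (k + 1) (\<psi> (- int k)) z) has_field_derivative
        (if k = 0 then \<psi> 0 z else int_from0 k (\<psi> (- int k)) z)) (at z)"
      by (cases "k = 0") simp_all
  qed
  moreover have "(\<Sum>k=1..n. dz_pow k (\<psi> (int k)) z) + (\<Sum>k=0..m. if k = 0 then \<psi> 0 z else int_from0 k (\<psi> (- int k)) z)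
      = integro_diff_op n m \<psi> z"
    by (simp add: integro_diff_op_def sum.atLeast_Suc_atMost dz_pow_def)
  ultimately show ?thesis
    unfolding integro_diff_op_antideriv_def by (rule DERIV_add[THEN DERIV_cong])
qed

lemma powr_holomorphic_integro_diff_op_antideriv:
  assumes \<rho>: "\<rho> > -1" and r: "r > 0"
    and \<psi>: "\<And>k. k \<in> {-int m..int n} \<Longrightarrow> powr_holomorphic r \<rho> (\<psi> k)"
  shows "powr_holomorphic r (\<rho> - real n) (integro_diff_op_antideriv n m \<psi>)"
  unfolding integro_diff_op_antideriv_def
proof (intro powr_holomorphic_add powr_holomorphic_sum)
  fix k assume k: "k \<in> {1..n}"
  then have "int k \<in> {-int m..int n}" by simp
  from powr_holomorphic_dz_pow[OF \<psi>[OF this], of "k - 1"]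
  show "powr_holomorphic r (\<rho> - real n) (dz_pow (k - 1) (\<psi> (int k)))"
    by (rule powr_holomorphic_lower_exponent[where j = "n - (k - 1)"]) (use k in auto)
next
  fix k assume k: "k \<in> {0..m}"
  then have "- int k \<in> {-int m..int n}" by simp
  from powr_holomorphic_int_from0[OF \<rho> r \<psi>[OF this], of k]
  have "powr_holomorphic r (\<rho> + real (Suc k)) (int_from0 (k + 1) (\<psi> (- int k)))" by simp
  then show "powr_holomorphic r (\<rho> - real n) (int_from0 (k + 1) (\<psi> (- int k)))"
    by (rule powr_holomorphic_lower_exponent[where j = "n + k + 1"]) auto
qed

(* On the circle |z| = s, z powr \<beta> = exp (\<beta> (ln s + i \<theta>)) for -\<pi> < \<theta> \<le> \<pi>; continuity of K at -s
   then forces the two one-sided values exp (\<beta> (ln s \<plusminus> i \<pi>)) to agree. *)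
lemma powr_holomorphic_const_eq_0:
  assumes f: "powr_holomorphic r \<beta> f" and \<beta>: "\<beta> \<notin> \<int>" and e: "0 < e" "e \<le> r"
    and c: "\<And>z. z \<in> slit_ball e \<Longrightarrow> f z = c"
  shows "c = 0"
proof (rule ccontr)
  assume "c \<noteq> 0"
  obtain K where K: "K holomorphic_on ball 0 r" "\<And>z. z \<in> slit_ball r \<Longrightarrow> f z = z powr of_real \<beta> * K z"
    using f unfolding powr_holomorphic_def by blast
  define s where "s = e / 2"
  have s: "0 < s" "s < e" using e by (auto simp: s_def)
  define L where "L \<theta> = complex_of_real (ln s) + \<i> * of_real \<theta>" for \<theta>
  define E where "E \<theta> = K (exp (L \<theta>)) - c * exp (- (of_real \<beta> * L \<theta>))" for \<theta>
  have norm_exp_L: "norm (exp (L \<theta>)) = s" for \<theta>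
    using s by (simp add: L_def)
  define S where "S = {pi/2<..<pi} \<union> {-pi<..<-pi/2}"
  have "E \<theta> = 0" if "\<theta> \<in> S" for \<theta>
  proof -
    have "sin \<theta> \<noteq> 0"
      using that sin_gt_zero[of \<theta>] sin_gt_zero[of "-\<theta>"] by (auto simp: S_def)
    then have "exp (L \<theta>) \<in> slit_ball e"
      using s norm_exp_L[of \<theta>] by (auto simp: slit_ball_def L_def Im_exp)
    then have "c = exp (L \<theta>) powr of_real \<beta> * K (exp (L \<theta>))"
      using c K(2) slit_ball_mono[OF e(2)] by auto
    also have "exp (L \<theta>) powr of_real \<beta> = exp (of_real \<beta> * L \<theta>)"
      using that pi_gt_zero by (auto simp: powr_def L_def S_def)
    finally show ?thesis by (simp add: E_def exp_minus field_simps)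
  qed
  moreover have "continuous_on (closure S) E"
  proof (intro continuous_at_imp_continuous_on ballI)
    fix \<theta>
    have "isCont K (exp (L \<theta>))"
      using K(1) s e norm_exp_L[of \<theta>]
      by (intro holomorphic_on_imp_continuous_on[THEN continuous_on_interior]) auto
    moreover have "isCont (\<lambda>\<theta>. exp (L \<theta>)) \<theta>"
      unfolding L_def by (intro continuous_intros)
    ultimately have "isCont (\<lambda>\<theta>. K (exp (L \<theta>))) \<theta>"
      using isCont_o2 by blast
    then show "isCont E \<theta>"
      unfolding E_def by (intro continuous_intros) (auto simp: L_def intro!: continuous_intros)
  qed
  moreover have "pi \<in> closure S" "-pi \<in> closure S"
    by (auto simp: S_def closure_Un)
  ultimately have "E pi = 0" "E (-pi) = 0"
    by (auto intro: continuous_constant_on_closure)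
  moreover have "exp (L pi) = exp (L (-pi))"
    by (simp add: L_def exp_add exp_diff)
  ultimately have "exp (of_real \<beta> * L pi) = exp (of_real \<beta> * L (-pi))"
    using \<open>c \<noteq> 0\<close> by (simp add: E_def exp_minus)
  then have "\<beta> \<in> \<int>"
    by (intro Ints_if_exp_mult_eq_across_cut[where a = "of_real (ln s)"]) (simp add: L_def)
  with \<beta> show False ..
qed

lemma vanishes_near0_iff_antiderivative:
  assumes r: "r > 0" and G: "powr_holomorphic r \<beta> G" and \<beta>: "\<beta> \<notin> \<int>"
    and G': "\<And>z. z \<in> slit_ball r \<Longrightarrow> (G has_field_derivative F z) (at z)"
  shows "vanishes_near0 F \<longleftrightarrow> vanishes_near0 G"
proof
  assume "vanishes_near0 F"
  then obtain e where e: "e > 0" "\<And>z. z \<in> slit_ball e \<Longrightarrow> F z = 0"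
    unfolding vanishes_near0_def by blast
  define d where "d = min e r"
  have d: "d > 0" "d \<le> r" and sub: "slit_ball d \<subseteq> slit_ball r" "slit_ball d \<subseteq> slit_ball e"
    using e r slit_ball_mono by (auto simp: d_def)
  have "continuous_on (slit_ball d) G"
    using G' sub(1) by (intro continuous_at_imp_continuous_on ballI DERIV_isCont) blast
  moreover have "\<forall>z\<in>slit_ball d - {}. (G has_field_derivative 0) (at z)"
    using G' e(2) sub by force
  ultimately obtain c where c: "\<And>z. z \<in> slit_ball d \<Longrightarrow> G z = c"
    using DERIV_zero_connected_constant[OF connected_slit_ball[OF d(1)] open_slit_ball finite.emptyI]
    by blast
  with powr_holomorphic_const_eq_0[OF G \<beta> d] have "c = 0" by blast
  with d c show "vanishes_near0 G" unfolding vanishes_near0_def by auto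
next
  assume "vanishes_near0 G"
  then obtain e where e: "e > 0" "\<And>z. z \<in> slit_ball e \<Longrightarrow> G z = 0"
    unfolding vanishes_near0_def by blast
  define d where "d = min e r"
  have d: "d > 0" and sub: "slit_ball d \<subseteq> slit_ball r" "slit_ball d \<subseteq> slit_ball e"
    using e r slit_ball_mono by (auto simp: d_def)
  have "F z = 0" if z: "z \<in> slit_ball d" for z
  proof -
    have "(G has_field_derivative 0) (at z)"
      by (rule has_field_derivative_transform_within_open[OF DERIV_const[of 0] open_slit_ball z])
         (use e(2) sub(2) in auto)
    moreover have "(G has_field_derivative F z) (at z)"
      using G' z sub(1) by blast
    ultimately show ?thesis by (metis DERIV_unique)
  qed
  with d show "vanishes_near0 F" unfolding vanishes_near0_def by blast
qed

theorem propositionB1: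
  fixes \<rho> :: real and g :: "complex \<Rightarrow> complex" and \<phi> :: "complex \<Rightarrow> complex"
    and h :: "int \<Rightarrow> complex \<Rightarrow> complex" and n m :: nat and r :: real
  assumes "\<rho> > -1" and "\<rho> \<notin> \<int>"
    and "r > 0"
    and "g holomorphic_on ball 0 r"
    and "\<And>z. z \<in> slit_ball r \<Longrightarrow> \<phi> z = z powr (of_real \<rho>) * g z"
    and "\<And>k. k \<in> {-int m..int n} \<Longrightarrow> h k holomorphic_on ball 0 r"
  shows "vanishes_near0 (\<lambda>z.
            (\<Sum>k=0..n. dz_pow k (\<lambda>w. h (int k) w * \<phi> w) z)
          + (\<Sum>k=1..m. int_from0 k (\<lambda>w. h (- int k) w * \<phi> w) z))
     \<longleftrightarrow> vanishes_near0 (\<lambda>z.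
            (\<Sum>k=1..n. dz_pow (k - 1) (\<lambda>w. h (int k) w * \<phi> w) z)
          + (\<Sum>k=0..m. int_from0 (k + 1) (\<lambda>w. h (- int k) w * \<phi> w) z))"
proof -
  define \<psi> where "\<psi> = (\<lambda>k w. h k w * \<phi> w)"
  have \<psi>: "powr_holomorphic r \<rho> (\<psi> k)" if "k \<in> {-int m..int n}" for k
    unfolding powr_holomorphic_def \<psi>_def
  proof (intro exI[of _ "\<lambda>w. h k w * g w"] conjI ballI)
    show "(\<lambda>w. h k w * g w) holomorphic_on ball 0 r"
      using assms(4) assms(6)[OF that] by (rule holomorphic_on_mult[rotated])
  qed (simp add: assms(5))
  have "\<rho> - real n \<notin> \<int>"
  proof
    assume "\<rho> - real n \<in> \<int>"
    then have "\<rho> - real n + real n \<in> \<int>" by (intro Ints_add) auto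
    with assms(2) show False by simp
  qed
  from vanishes_near0_iff_antiderivative[OF assms(3)
      powr_holomorphic_integro_diff_op_antideriv[where \<psi> = \<psi> and m = m, OF assms(1,3) \<psi>] this
      has_field_derivative_integro_diff_op_antideriv[where \<psi> = \<psi> and m = m, OF assms(1,3) \<psi>]]
  show ?thesis
    by (simp add: integro_diff_op_def integro_diff_op_antideriv_def \<psi>_def)
qed

end
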